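(* Let $n\ge2$, $s>\frac n2-1$ and $\max\{\frac14,\frac18n+\frac14-\frac14s\}<\rho<\frac12$. Then there is a constant $C$ such that for all $(\xi,\tau)\in\mathbb{R}^n\times\mathbb{R}$, $$\Theta_2(\xi,\tau)=\int_{\mathbb{R}^{n+1}}\frac{(1+|\zeta|)^{-s}(1+|\xi-\zeta|)^{-s}}{(1+|\tau_1+\zeta^2|)^{2\rho}(1+|\tau-\tau_1+(\xi-\zeta)^2|)^{2\rho}}d\tau_1d\zeta\le C.$$
   Context: $\zeta\in\mathbb{R}^n$, $\tau_1\in\mathbb{R}$; $\zeta^2=|\zeta|^2$, $(\xi-\zeta)^2=|\xi-\zeta|^2$. *)

theory Defs
  imports "HOL-Analysis.Analysis"
begin

definition Theta2_integrand ::
  "real \<Rightarrow> real \<Rightarrow> real ^ 'n \<Rightarrow> real \<Rightarrow> (real ^ 'n) \<times> real \<Rightarrow> real" where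
  "Theta2_integrand s \<rho> \<xi> \<tau> p =
     (let \<zeta> = fst p; \<tau>\<^sub>1 = snd p in
       ((1 + norm \<zeta>) powr (-s) * (1 + norm (\<xi> - \<zeta>)) powr (-s)) /
       ((1 + \<bar>\<tau>\<^sub>1 + (norm \<zeta>)\<^sup>2\<bar>) powr (2 * \<rho>) *
        (1 + \<bar>\<tau> - \<tau>\<^sub>1 + (norm (\<xi> - \<zeta>))\<^sup>2\<bar>) powr (2 * \<rho>)))"

definition Theta2 :: "real \<Rightarrow> real \<Rightarrow> real ^ 'n \<Rightarrow> real \<Rightarrow> ennreal" where
  "Theta2 s \<rho> \<xi> \<tau> = (\<integral>\<^sup>+ p. ennreal (Theta2_integrand s \<rho> \<xi> \<tau> p) \<partial>lborel)"

end

theory Submission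
  imports Defs
begin

text \<open>
  Put A = 1 + |\<tau>_1 + |\<zeta>|^2|, B = 1 + |\<tau> - \<tau>_1 + |\<xi> - \<zeta>|^2| and D = 1 + |\<tau> + |\<zeta>|^2 + |\<xi> - \<zeta>|^2|,
  so that D \<le> A + B. Splitting 4\<rho> = \<beta> + \<delta> with 2\<rho> \<le> \<delta> gives
  (A B)^(-2\<rho>) \<le> 2^\<beta> D^(-\<beta>) (A^(-\<delta>) + B^(-\<delta>)), and for \<delta> > 1 the \<tau>_1-integral of the
  right-hand side is a constant times D^(-\<beta>). Completing the square, D = 1 + 2 ||\<zeta> - \<xi>/2|^2 - c|,
  and (1 + |\<zeta>|)^(-s) (1 + |\<xi> - \<zeta>|)^(-s) \<le> (1 + |\<zeta>|)^(-2s) + (1 + |\<xi> - \<zeta>|)^(-2s). It remains to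
  bound \<integral> (1 + |z - q|)^(-a) (1 + ||z - p|^2 - c|)^(-\<beta>) dz uniformly in q, p, c, where a = 2s.

  Decomposing both factors dyadically reduces this to the measure of B(q, R) \<inter> {||z - p|^2 - c| < T},
  which is at most min (\<omega> R^n) (C T R^(n-2)): the thin-shell bound comes from slicing the shell
  along a coordinate carrying a 1/n share of |z - p|^2. Interpolation gives the bound
  R^(n - 2\<sigma>) T^\<sigma>, and both geometric series converge once n - a < 2\<sigma> < 2\<beta>; such \<sigma> and \<beta>
  exist exactly under the hypotheses on s and \<rho>.
\<close>

lemma power_powr_commute:
  fixes x e :: real
  assumes "0 < x"
  shows "(x ^ k) powr e = (x powr e) ^ k"
  using assms by (simp add: powr_power powr_realpow[symmetric] powr_powr mult.commute)

lemma min_le_powr_interpolation: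
  fixes X Y t :: real
  assumes "0 \<le> X" "0 \<le> Y" "0 \<le> t" "t \<le> 1"
  shows "min X Y \<le> X powr (1 - t) * Y powr t"
proof (cases "X = 0 \<or> Y = 0")
  case True
  then show ?thesis using assms by auto
next
  case False
  then have XY: "X > 0" "Y > 0" using assms by auto
  show ?thesis
  proof (cases "X \<le> Y")
    case True
    have "min X Y = X powr (1 - t) * X powr t" using XY True by (simp add: powr_add[symmetric])
    also have "\<dots> \<le> X powr (1 - t) * Y powr t"
      using XY True assms by (intro mult_left_mono powr_mono2) auto
    finally show ?thesis .
  next
    case False
    have "min X Y = Y powr (1 - t) * Y powr t" using XY False by (simp add: powr_add[symmetric])
    also have "\<dots> \<le> X powr (1 - t) * Y powr t"
      using XY False assms by (intro mult_right_mono powr_mono2) auto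
    finally show ?thesis .
  qed
qed

lemma powr_neg_mult_le_add:
  fixes x y s :: real
  assumes "0 < x" "0 < y"
  shows "x powr (-s) * y powr (-s) \<le> x powr (-(2 * s)) + y powr (-(2 * s))"
proof -
  have sq: "(z powr (-s))\<^sup>2 = z powr (-(2 * s))" if "0 < z" for z :: real
    using that by (simp add: powr_power)
  have "2 * (x powr (-s) * y powr (-s)) \<le> (x powr (-s))\<^sup>2 + (y powr (-s))\<^sup>2"
    using sum_squares_bound[of "x powr (-s)" "y powr (-s)"] by (simp add: mult.assoc)
  moreover have "0 \<le> x powr (-s) * y powr (-s)" by simp
  ultimately show ?thesis using sq[OF assms(1)] sq[OF assms(2)] by linarith
qed

lemma inverse_powr_mult_le_decoupled_ordered:
  fixes X Y D \<alpha> \<beta> \<delta> :: real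
  assumes "1 \<le> Y" "Y \<le> X" "0 < D" "D \<le> 2 * X"
    and "0 \<le> \<beta>" "\<beta> + \<delta> = 2 * \<alpha>" "\<alpha> \<le> \<delta>"
  shows "1 / (X powr \<alpha> * Y powr \<alpha>) \<le> 2 powr \<beta> * D powr (-\<beta>) * Y powr (-\<delta>)"
proof -
  have X: "1 \<le> X" using assms by linarith
  have "D powr \<beta> \<le> (2 * X) powr \<beta>" using assms by (intro powr_mono2) auto
  also have "\<dots> = 2 powr \<beta> * X powr \<beta>" using X by (simp add: powr_mult)
  finally have D_le: "D powr \<beta> \<le> 2 powr \<beta> * X powr \<beta>" .
  have "X powr \<beta> * Y powr \<delta> = X powr \<beta> * Y powr (\<delta> - \<alpha>) * Y powr \<alpha>"
    by (simp add: powr_add[symmetric])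
  also have "\<dots> \<le> X powr \<beta> * X powr (\<delta> - \<alpha>) * Y powr \<alpha>"
    using assms by (intro mult_right_mono mult_left_mono powr_mono2) auto
  also have "\<dots> = X powr \<alpha> * Y powr \<alpha>"
    using assms by (simp add: powr_add[symmetric] add_diff_eq)
  finally have XY: "X powr \<beta> * Y powr \<delta> \<le> X powr \<alpha> * Y powr \<alpha>" .
  have "D powr \<beta> * Y powr \<delta> \<le> 2 powr \<beta> * X powr \<beta> * Y powr \<delta>"
    using D_le by (intro mult_right_mono) auto
  also have "\<dots> \<le> 2 powr \<beta> * (X powr \<alpha> * Y powr \<alpha>)"
    unfolding mult.assoc by (intro mult_left_mono XY) auto
  finally have "D powr \<beta> * Y powr \<delta> \<le> 2 powr \<beta> * (X powr \<alpha> * Y powr \<alpha>)" .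
  then show ?thesis using assms X by (simp add: powr_minus field_simps)
qed

lemma inverse_powr_mult_le_decoupled:
  fixes A B D \<alpha> \<beta> \<delta> :: real
  assumes "1 \<le> A" "1 \<le> B" "0 < D" "D \<le> A + B"
    and "0 \<le> \<beta>" "\<beta> + \<delta> = 2 * \<alpha>" "\<alpha> \<le> \<delta>"
  shows "1 / (A powr \<alpha> * B powr \<alpha>) \<le> 2 powr \<beta> * D powr (-\<beta>) * (A powr (-\<delta>) + B powr (-\<delta>))"
proof -
  have "1 / (A powr \<alpha> * B powr \<alpha>) \<le> 2 powr \<beta> * D powr (-\<beta>) * min A B powr (-\<delta>)"
  proof (cases "B \<le> A")
    case True
    then show ?thesis
      using assms inverse_powr_mult_le_decoupled_ordered[of B A D \<beta> \<delta> \<alpha>] by auto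
  next
    case False
    then show ?thesis
      using assms inverse_powr_mult_le_decoupled_ordered[of A B D \<beta> \<delta> \<alpha>] by (auto simp: mult.commute)
  qed
  also have "\<dots> \<le> 2 powr \<beta> * D powr (-\<beta>) * (A powr (-\<delta>) + B powr (-\<delta>))"
    by (intro mult_left_mono) (auto simp: min_def)
  finally show ?thesis .
qed

lemma power_min_mult_div_le:
  fixes r R K :: real and n :: nat
  assumes "0 < r" "0 < R" "2 \<le> n" "0 \<le> K"
  shows "(2 * min r R) ^ (n - 1) * (K / R) \<le> 2 ^ (n - 1) * K * r ^ (n - 2)"
proof -
  have n: "n - 1 = Suc (n - 2)" using assms by simp
  have "(2 * min r R) ^ (n - 1) * (K / R) = 2 ^ (n - 1) * K * (min r R ^ (n - 2) * (min r R / R))"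
    unfolding n by (simp add: power_mult_distrib ac_simps)
  also have "\<dots> \<le> 2 ^ (n - 1) * K * (r ^ (n - 2) * 1)"
    using assms by (intro mult_left_mono mult_mono power_mono) auto
  finally show ?thesis by simp
qed

lemma ex_sum_le_card_mult:
  fixes g :: "'i \<Rightarrow> real"
  assumes "finite B" "B \<noteq> {}"
  shows "\<exists>i\<in>B. (\<Sum>j\<in>B. g j) \<le> real (card B) * g i"
proof -
  have "Max (g ` B) \<in> g ` B" using assms by (intro Max_in) auto
  then obtain i where i: "i \<in> B" "g i = Max (g ` B)" by auto
  then have "\<forall>j\<in>B. g j \<le> g i" using assms by simp
  then show ?thesis using i(1) sum_bounded_above[of B g "g i"] by blast
qed

lemma norm_sq_add_norm_diff_sq:
  fixes \<xi> \<zeta> :: "'a::real_inner"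
  shows "(norm \<zeta>)\<^sup>2 + (norm (\<xi> - \<zeta>))\<^sup>2 = 2 * (norm (\<zeta> - (1/2) *\<^sub>R \<xi>))\<^sup>2 + (norm \<xi>)\<^sup>2 / 2"
  by (simp add: power2_norm_eq_inner inner_diff_left inner_diff_right inner_commute algebra_simps)

section \<open>Dyadic decompositions\<close>

lemma suminf_ennreal_geometric:
  fixes x M :: real
  assumes "0 \<le> x" "x < 1" "0 \<le> M"
  shows "(\<Sum>k. ennreal (M * x ^ k)) = ennreal (M / (1 - x))"
proof -
  have "summable (\<lambda>k. M * x ^ k)" using assms by (intro summable_mult summable_geometric) auto
  then have "(\<Sum>k. ennreal (M * x ^ k)) = ennreal (\<Sum>k. M * x ^ k)"
    using assms by (intro suminf_ennreal2) auto
  also have "(\<Sum>k. M * x ^ k) = M / (1 - x)"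
    using assms by (subst suminf_mult) (auto intro: summable_geometric simp: suminf_geometric)
  finally show ?thesis .
qed

lemma suminf_suminf_ennreal_geometric:
  fixes x y P :: real
  assumes "0 \<le> P" "0 \<le> x" "x < 1" "0 \<le> y" "y < 1"
  shows "(\<Sum>k. \<Sum>j. ennreal (P * x ^ k * y ^ j)) = ennreal (P / (1 - y) / (1 - x))"
proof -
  have inner: "(\<Sum>j. ennreal (P * x ^ k * y ^ j)) = ennreal (P / (1 - y) * x ^ k)" for k
  proof -
    have "(\<Sum>j. ennreal (P * x ^ k * y ^ j)) = ennreal (P * x ^ k / (1 - y))"
      using assms by (intro suminf_ennreal_geometric) auto
    then show ?thesis by simp
  qed
  have "(\<Sum>k. \<Sum>j. ennreal (P * x ^ k * y ^ j)) = (\<Sum>k. ennreal (P / (1 - y) * x ^ k))"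
    by (simp only: inner)
  also have "\<dots> = ennreal (P / (1 - y) / (1 - x))"
    using assms by (intro suminf_ennreal_geometric) auto
  finally show ?thesis .
qed

lemma powr_neg_le_dyadic_sum:
  fixes t e :: real
  assumes "0 \<le> t" "0 \<le> e"
  shows "ennreal ((1 + t) powr (-e)) \<le> (\<Sum>k. ennreal (2 powr e * (2 powr (-e)) ^ k) * indicator {..<2 ^ k} t)"
proof -
  define f where "f i = ennreal (2 powr e * (2 powr (-e)) ^ i) * indicator {..<2 ^ i} t" for i :: nat
  define k where "k = (LEAST k::nat. t < 2 ^ k)"
  have "\<exists>k::nat. t < 2 ^ k" using real_arch_pow[of 2 t] by auto
  then have t_less: "t < 2 ^ k" unfolding k_def by (rule LeastI_ex)
  have "(1 + t) powr (-e) \<le> 2 powr e * (2 powr (-e)) ^ k"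
  proof (cases k)
    case 0
    have "(1 + t) powr (-e) \<le> 1" using powr_mono2'[of "-e" 1 "1 + t"] assms by simp
    also have "1 \<le> 2 powr e" using assms by (simp add: ge_one_powr_ge_zero)
    finally show ?thesis using 0 by simp
  next
    case (Suc m)
    then have "2 ^ m \<le> t" unfolding k_def using not_less_Least[of m "\<lambda>k. t < 2 ^ k"] by auto
    then have "(1 + t) powr (-e) \<le> (2 ^ m) powr (-e)"
      using assms by (intro powr_mono2') auto
    also have "\<dots> = 2 powr e * (2 powr (-e)) ^ k"
      by (simp add: Suc power_powr_commute powr_minus divide_simps)
    finally show ?thesis .
  qed
  then have "ennreal ((1 + t) powr (-e)) \<le> f k"
    using t_less by (auto simp: f_def intro: ennreal_leI)
  also have "f k \<le> (\<Sum>i. f i)"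
    using sum_le_suminf[of f "{k}"] by auto
  finally show ?thesis unfolding f_def .
qed

lemma nn_integral_one_plus_abs_powr_le:
  fixes \<delta> :: real
  assumes "1 < \<delta>"
  shows "(\<integral>\<^sup>+t. ennreal ((1 + \<bar>t\<bar>) powr (-\<delta>)) \<partial>lborel) \<le> ennreal (2 * 2 powr \<delta> / (1 - 2 powr (1 - \<delta>)))"
proof -
  define u where "u k = 2 powr \<delta> * (2 powr (-\<delta>)) ^ k" for k :: nat
  have ratio: "2 powr (-\<delta>) * 2 = (2::real) powr (1 - \<delta>)"
    by (simp add: powr_diff powr_minus divide_simps)
  have "(\<integral>\<^sup>+t. ennreal ((1 + \<bar>t\<bar>) powr (-\<delta>)) \<partial>lborel)
      \<le> (\<integral>\<^sup>+t. (\<Sum>k. ennreal (u k) * indicator {-((2::real) ^ k)<..<2 ^ k} t) \<partial>lborel)"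
  proof (rule nn_integral_mono)
    fix t :: real
    show "ennreal ((1 + \<bar>t\<bar>) powr (-\<delta>)) \<le> (\<Sum>k. ennreal (u k) * indicator {-((2::real) ^ k)<..<2 ^ k} t)"
      using powr_neg_le_dyadic_sum[of "\<bar>t\<bar>" \<delta>] assms
      by (simp add: u_def indicator_def abs_less_iff minus_less_iff conj_commute)
  qed
  also have "\<dots> = (\<Sum>k. \<integral>\<^sup>+t. ennreal (u k) * indicator {-((2::real) ^ k)<..<2 ^ k} t \<partial>lborel)"
    by (intro nn_integral_suminf) measurable
  also have "\<dots> = (\<Sum>k. ennreal (u k * (2 * 2 ^ k)))"
    by (intro suminf_cong) (simp add: nn_integral_cmult_indicator u_def ennreal_mult)
  also have "\<dots> = (\<Sum>k. ennreal (2 * 2 powr \<delta> * (2 powr (1 - \<delta>)) ^ k))"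
  proof (intro suminf_cong arg_cong[where f = ennreal])
    fix k
    have "u k * (2 * 2 ^ k) = 2 * 2 powr \<delta> * (2 powr (-\<delta>) * 2) ^ k"
      unfolding u_def power_mult_distrib by (simp only: ac_simps)
    then show "u k * (2 * 2 ^ k) = 2 * 2 powr \<delta> * (2 powr (1 - \<delta>)) ^ k"
      by (simp only: ratio)
  qed
  also have "\<dots> = ennreal (2 * 2 powr \<delta> / (1 - 2 powr (1 - \<delta>)))"
    using assms by (intro suminf_ennreal_geometric) (auto intro: powr_less_one)
  finally show ?thesis .
qed

lemma nn_integral_affine_one_plus_abs_powr_le:
  fixes \<delta> c u :: real
  assumes "1 < \<delta>" "\<bar>u\<bar> = 1"
  shows "(\<integral>\<^sup>+t. ennreal ((1 + \<bar>c + u * t\<bar>) powr (-\<delta>)) \<partial>lborel) \<le> ennreal (2 * 2 powr \<delta> / (1 - 2 powr (1 - \<delta>)))"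
proof -
  have "(\<integral>\<^sup>+t. ennreal ((1 + \<bar>t\<bar>) powr (-\<delta>)) \<partial>lborel) =
      \<bar>u\<bar> * (\<integral>\<^sup>+t. ennreal ((1 + \<bar>c + u * t\<bar>) powr (-\<delta>)) \<partial>lborel)"
    using assms by (intro nn_integral_real_affine) auto
  then show ?thesis using assms nn_integral_one_plus_abs_powr_le[of \<delta>] by simp
qed

section \<open>Measure of thin spherical shells\<close>

lemma emeasure_sq_annulus_le:
  fixes b B z :: real
  assumes "0 \<le> b" "b \<le> B" "0 < B"
  shows "emeasure lborel {y. b \<le> (y - z)\<^sup>2 \<and> (y - z)\<^sup>2 \<le> B} \<le> ennreal (2 * (B - b) / sqrt B)"
proof -
  have sqrt_le: "sqrt b \<le> sqrt B" using assms by simp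
  have "{y. b \<le> (y - z)\<^sup>2 \<and> (y - z)\<^sup>2 \<le> B} \<subseteq> {z - sqrt B .. z - sqrt b} \<union> {z + sqrt b .. z + sqrt B}"
  proof
    fix y assume "y \<in> {y. b \<le> (y - z)\<^sup>2 \<and> (y - z)\<^sup>2 \<le> B}"
    then have "sqrt b \<le> \<bar>y - z\<bar>" "\<bar>y - z\<bar> \<le> sqrt B"
      by (auto simp: real_le_rsqrt real_sqrt_le_iff intro: real_le_lsqrt)
    then show "y \<in> {z - sqrt B .. z - sqrt b} \<union> {z + sqrt b .. z + sqrt B}"
      by (cases "z \<le> y") auto
  qed
  then have "emeasure lborel {y. b \<le> (y - z)\<^sup>2 \<and> (y - z)\<^sup>2 \<le> B}
      \<le> emeasure lborel ({z - sqrt B .. z - sqrt b} \<union> {z + sqrt b .. z + sqrt B})"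
    by (intro emeasure_mono) auto
  also have "\<dots> \<le> emeasure lborel {z - sqrt B .. z - sqrt b} + emeasure lborel {z + sqrt b .. z + sqrt B}"
    by (rule emeasure_subadditive) auto
  also have "\<dots> = ennreal (2 * (sqrt B - sqrt b))"
    using sqrt_le by (simp add: ennreal_plus[symmetric] del: ennreal_plus)
  also have "\<dots> \<le> ennreal (2 * (B - b) / sqrt B)"
  proof (rule ennreal_leI)
    have "(sqrt B - sqrt b) * sqrt B \<le> (sqrt B - sqrt b) * (sqrt B + sqrt b)"
      using sqrt_le assms by (intro mult_left_mono) auto
    also have "\<dots> = (sqrt B)\<^sup>2 - (sqrt b)\<^sup>2" by (simp add: algebra_simps power2_eq_square)
    also have "\<dots> = B - b" using assms(1) less_imp_le[OF assms(3)] by simp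
    finally have "(sqrt B - sqrt b) * sqrt B \<le> B - b" .
    then have "((sqrt B - sqrt b) * sqrt B) / sqrt B \<le> (B - b) / sqrt B"
      using assms by (intro divide_right_mono) auto
    then have "sqrt B - sqrt b \<le> (B - b) / sqrt B" using assms by simp
    then have "2 * (sqrt B - sqrt b) \<le> 2 * ((B - b) / sqrt B)" by (rule mult_left_mono) simp
    then show "2 * (sqrt B - sqrt b) \<le> 2 * (B - b) / sqrt B" by (simp only: times_divide_eq_right)
  qed
  finally show ?thesis .
qed

lemma emeasure_sq_shell_fibre_le:
  fixes a m T c z :: real
  assumes "0 \<le> m" "1 < c" "0 < T" "0 < a + T"
  shows "emeasure lborel {y. a - m < (y - z)\<^sup>2 \<and> (y - z)\<^sup>2 < a + T - m \<and> m \<le> (c - 1) * (y - z)\<^sup>2}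
           \<le> ennreal (2 * sqrt c * T / sqrt (a + T))"
    (is "emeasure lborel ?F \<le> _")
proof (cases "?F = {}")
  case False
  then obtain y0 where y0: "a - m < (y0 - z)\<^sup>2" "(y0 - z)\<^sup>2 < a + T - m" "m \<le> (c - 1) * (y0 - z)\<^sup>2"
    by blast
  define B where "B = a + T - m"
  define b where "b = max (a - m) 0"
  have "0 \<le> (y0 - z)\<^sup>2" by simp
  then have "0 < B" using y0(2) unfolding B_def by linarith
  then have B: "0 < B" "0 \<le> b" "b \<le> B" "B - b \<le> T"
    using assms unfolding b_def B_def by auto
  \<comment> \<open>A point of the fibre forces m \<le> (1 - 1/c) (a + T), i.e. a + T \<le> c B.\<close>
  have "a + T \<le> c * B"
  proof -
    have "m \<le> (c - 1) * B" using y0 assms unfolding B_def by (smt (verit) mult_left_mono)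
    then show ?thesis unfolding B_def by (simp add: algebra_simps)
  qed
  then have sqrt_aT: "sqrt (a + T) \<le> sqrt c * sqrt B" by (metis real_sqrt_le_mono real_sqrt_mult)
  have "?F \<subseteq> {y. b \<le> (y - z)\<^sup>2 \<and> (y - z)\<^sup>2 \<le> B}" unfolding b_def B_def by auto
  then have "emeasure lborel ?F \<le> emeasure lborel {y. b \<le> (y - z)\<^sup>2 \<and> (y - z)\<^sup>2 \<le> B}"
    by (intro emeasure_mono) auto
  also have "\<dots> \<le> ennreal (2 * (B - b) / sqrt B)" using B by (intro emeasure_sq_annulus_le) auto
  also have "\<dots> \<le> ennreal (2 * sqrt c * T / sqrt (a + T))"
  proof (rule ennreal_leI)
    have "2 * (B - b) / sqrt B \<le> 2 * T / sqrt B" using B by (simp add: divide_right_mono)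
    also have "\<dots> \<le> 2 * sqrt c * T / sqrt (a + T)"
      using sqrt_aT B assms by (simp add: field_simps)
    finally show "2 * (B - b) / sqrt B \<le> 2 * sqrt c * T / sqrt (a + T)" .
  qed
  finally show ?thesis .
next
  case True
  then show ?thesis by (simp only: emeasure_empty) simp
qed

(* For c = DIM('a) these slabs cover the part of the shell a < |f - p|^2 < a + T in the cube
   around q, because some coordinate carries a 1/DIM('a) share of |f - p|^2; along coordinate i
   each slab has fibres of length O(T / sqrt (a + T)). *)
definition coord_slab ::
  "'i set \<Rightarrow> 'i \<Rightarrow> ('i \<Rightarrow> real) \<Rightarrow> ('i \<Rightarrow> real) \<Rightarrow> real \<Rightarrow> real \<Rightarrow> real \<Rightarrow> real \<Rightarrow> ('i \<Rightarrow> real) set"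
  where "coord_slab I i q p r a T c =
    {f \<in> space (PiM I (\<lambda>_. lborel)). (\<forall>j\<in>I - {i}. \<bar>f j - q j\<bar> \<le> r) \<and>
       a < (\<Sum>j\<in>I. (f j - p j)\<^sup>2) \<and> (\<Sum>j\<in>I. (f j - p j)\<^sup>2) < a + T \<and>
       (\<Sum>j\<in>I. (f j - p j)\<^sup>2) \<le> c * (f i - p i)\<^sup>2}"

lemma sets_coord_slab:
  assumes "finite I" "i \<in> I"
  shows "coord_slab I i q p r a T c \<in> sets (PiM I (\<lambda>_. lborel))"
proof -
  define M where "M = PiM I (\<lambda>_. lborel::real measure)"
  have component: "(\<lambda>f. f j) \<in> borel_measurable M" if "j \<in> I" for j
    unfolding M_def using measurable_component_singleton[OF that, of "\<lambda>_. lborel::real measure"]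
    by (simp cong: measurable_cong_sets)
  have dist_sq: "(\<lambda>f. \<Sum>j\<in>I. (f j - p j)\<^sup>2) \<in> borel_measurable M"
    using component by (intro borel_measurable_sum) auto
  have [measurable]: "(\<lambda>f. f i) \<in> borel_measurable M" using component assms by auto
  have "finite (I - {i})" using assms by simp
  have "{f \<in> space M. (\<forall>j\<in>I - {i}. \<bar>f j - q j\<bar> \<le> r) \<and>
       a < (\<Sum>j\<in>I. (f j - p j)\<^sup>2) \<and> (\<Sum>j\<in>I. (f j - p j)\<^sup>2) < a + T \<and>
       (\<Sum>j\<in>I. (f j - p j)\<^sup>2) \<le> c * (f i - p i)\<^sup>2} \<in> sets M"
  proof (intro sets.sets_Collect_conj sets.sets_Collect_finite_All)
    fix j assume "j \<in> I - {i}"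
    then have [measurable]: "(\<lambda>f. f j) \<in> borel_measurable M" using component by auto
    show "{f \<in> space M. \<bar>f j - q j\<bar> \<le> r} \<in> sets M" by measurable
  qed (use \<open>finite (I - {i})\<close> dist_sq in measurable)
  then show ?thesis unfolding coord_slab_def M_def .
qed

lemma coord_slab_fibre:
  fixes x :: "'i \<Rightarrow> real"
  assumes "finite I" "i \<in> I" "x \<in> extensional (I - {i})"
    and "x(i := y) \<in> coord_slab I i q p r a T c"
    and m: "m = (\<Sum>j\<in>I - {i}. (x j - p j)\<^sup>2)"
  shows "x \<in> PiE (I - {i}) (\<lambda>j. {max (q j - r) (p j - sqrt (a + T)) .. min (q j + r) (p j + sqrt (a + T))})"
    and "a - m < (y - p i)\<^sup>2 \<and> (y - p i)\<^sup>2 < a + T - m \<and> m \<le> (c - 1) * (y - p i)\<^sup>2"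
proof -
  have split: "(\<Sum>j\<in>I. ((x(i := y)) j - p j)\<^sup>2) = (y - p i)\<^sup>2 + m"
  proof -
    have "(\<Sum>j\<in>I - {i}. ((x(i := y)) j - p j)\<^sup>2) = m" unfolding m by (intro sum.cong) auto
    then show ?thesis using assms(1,2) by (simp add: sum.remove)
  qed
  have "(\<forall>j\<in>I - {i}. \<bar>(x(i := y)) j - q j\<bar> \<le> r) \<and> a < (y - p i)\<^sup>2 + m \<and>
      (y - p i)\<^sup>2 + m < a + T \<and> (y - p i)\<^sup>2 + m \<le> c * ((x(i := y)) i - p i)\<^sup>2"
    using assms(4) unfolding coord_slab_def split[symmetric] by blast
  then have box: "\<forall>j\<in>I - {i}. \<bar>x j - q j\<bar> \<le> r"
    and shell: "a < (y - p i)\<^sup>2 + m" "(y - p i)\<^sup>2 + m < a + T"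
    and dominant: "(y - p i)\<^sup>2 + m \<le> c * (y - p i)\<^sup>2"
    by auto
  show "a - m < (y - p i)\<^sup>2 \<and> (y - p i)\<^sup>2 < a + T - m \<and> m \<le> (c - 1) * (y - p i)\<^sup>2"
    using shell dominant by (simp add: algebra_simps)
  have near_p: "\<bar>x j - p j\<bar> \<le> sqrt (a + T)" if "j \<in> I - {i}" for j
  proof -
    have "(x j - p j)\<^sup>2 \<le> m" unfolding m using assms(1) that by (intro member_le_sum) auto
    then have "(x j - p j)\<^sup>2 \<le> a + T" using shell(2) zero_le_power2[of "y - p i"] by linarith
    then show ?thesis by (simp add: real_le_rsqrt)
  qed
  show "x \<in> PiE (I - {i}) (\<lambda>j. {max (q j - r) (p j - sqrt (a + T)) .. min (q j + r) (p j + sqrt (a + T))})"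
  proof (rule PiE_I)
    fix j assume j: "j \<in> I - {i}"
    show "x j \<in> {max (q j - r) (p j - sqrt (a + T)) .. min (q j + r) (p j + sqrt (a + T))}"
      using bspec[OF box j] near_p[OF j] by (auto simp: abs_le_iff)
  next
    fix j assume "j \<notin> I - {i}"
    then show "x j = undefined" using assms(3) by (simp add: extensional_def)
  qed
qed

lemma emeasure_PiM_Icc_le:
  fixes l u :: "'i \<Rightarrow> real"
  assumes "finite A" "0 \<le> w" "\<And>j. j \<in> A \<Longrightarrow> u j - l j \<le> w"
  shows "emeasure (PiM A (\<lambda>_. lborel)) (PiE A (\<lambda>j. {l j .. u j})) \<le> ennreal (w ^ card A)"
proof -
  interpret product_sigma_finite "\<lambda>_. lborel::real measure" by standard
  have "emeasure (PiM A (\<lambda>_. lborel)) (PiE A (\<lambda>j. {l j .. u j})) = (\<Prod>j\<in>A. emeasure lborel {l j .. u j})"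
    using assms by (intro emeasure_PiM) auto
  also have "\<dots> \<le> (\<Prod>j\<in>A. ennreal w)"
    using assms by (intro prod_mono_ennreal) (auto simp: emeasure_lborel_Icc_eq intro: ennreal_leI)
  also have "\<dots> = ennreal (w ^ card A)" using assms by (simp add: prod_ennreal ennreal_power)
  finally show ?thesis .
qed

lemma nn_integral_coord_slab_fibre_le:
  fixes x :: "'i \<Rightarrow> real"
  assumes "finite I" "i \<in> I" "1 < c" "0 < T" "0 < a + T" "x \<in> extensional (I - {i})"
  shows "(\<integral>\<^sup>+y. indicator (coord_slab I i q p r a T c) (x(i := y)) \<partial>lborel)
    \<le> ennreal (2 * sqrt c * T / sqrt (a + T))
      * indicator (PiE (I - {i}) (\<lambda>j. {max (q j - r) (p j - sqrt (a + T)) .. min (q j + r) (p j + sqrt (a + T))})) x"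
proof -
  define S where "S = coord_slab I i q p r a T c"
  define m where "m = (\<Sum>j\<in>I - {i}. (x j - p j)\<^sup>2)"
  have m: "0 \<le> m" unfolding m_def by (simp add: sum_nonneg)
  note fibre = coord_slab_fibre[OF assms(1,2,6) _ m_def, where q=q and r=r and a=a and T=T and c=c, folded S_def]
  show ?thesis
  proof (cases "x \<in> PiE (I - {i}) (\<lambda>j. {max (q j - r) (p j - sqrt (a + T)) .. min (q j + r) (p j + sqrt (a + T))})")
    case True
    have "(\<integral>\<^sup>+y. indicator S (x(i := y)) \<partial>lborel) \<le>
        (\<integral>\<^sup>+y. indicator {y. a - m < (y - p i)\<^sup>2 \<and> (y - p i)\<^sup>2 < a + T - m \<and> m \<le> (c - 1) * (y - p i)\<^sup>2} y \<partial>lborel)"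
      using fibre(2) by (intro nn_integral_mono) (auto simp: indicator_def)
    also have "\<dots> \<le> ennreal (2 * sqrt c * T / sqrt (a + T))"
      using m assms by (simp add: emeasure_sq_shell_fibre_le)
    finally show ?thesis using True unfolding S_def by simp
  next
    case False
    then have "\<And>y. x(i := y) \<notin> S" using fibre(1) by blast
    with False show ?thesis unfolding S_def by simp
  qed
qed

lemma emeasure_coord_slab_le:
  assumes "finite I" "i \<in> I" "1 < c" "0 < T" "0 < a + T" "0 < r"
  shows "emeasure (PiM I (\<lambda>_. lborel)) (coord_slab I i q p r a T c)
     \<le> ennreal ((2 * min r (sqrt (a + T))) ^ (card I - 1) * (2 * sqrt c * T / sqrt (a + T)))"
proof -
  interpret product_sigma_finite "\<lambda>_. lborel::real measure" by standard
  define A where "A = I - {i}"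
  define S where "S = coord_slab I i q p r a T c"
  define L where "L = 2 * sqrt c * T / sqrt (a + T)"
  define Box where "Box = PiE A (\<lambda>j. {max (q j - r) (p j - sqrt (a + T)) .. min (q j + r) (p j + sqrt (a + T))})"
  have I: "I = insert i A" "i \<notin> A" "finite A" using assms unfolding A_def by auto
  have S_sets: "S \<in> sets (PiM (insert i A) (\<lambda>_. lborel))"
    unfolding S_def I(1)[symmetric] using assms by (intro sets_coord_slab)
  have "emeasure (PiM I (\<lambda>_. lborel)) S = (\<integral>\<^sup>+f. indicator S f \<partial>PiM (insert i A) (\<lambda>_. lborel))"
    using S_sets I by simp
  also have "\<dots> = (\<integral>\<^sup>+x. \<integral>\<^sup>+y. indicator S (x(i := y)) \<partial>lborel \<partial>PiM A (\<lambda>_. lborel))"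
    using I S_sets by (intro product_nn_integral_insert) auto
  also have "\<dots> \<le> (\<integral>\<^sup>+x. ennreal L * indicator Box x \<partial>PiM A (\<lambda>_. lborel))"
    unfolding S_def L_def Box_def A_def using assms
    by (intro nn_integral_mono nn_integral_coord_slab_fibre_le) (auto simp: space_PiM PiE_def)
  also have "\<dots> = ennreal L * emeasure (PiM A (\<lambda>_. lborel)) Box"
    unfolding Box_def using I by (intro nn_integral_cmult_indicator sets_PiM_I_finite) auto
  also have "\<dots> \<le> ennreal L * ennreal ((2 * min r (sqrt (a + T))) ^ card A)"
    unfolding Box_def using I assms by (intro mult_left_mono emeasure_PiM_Icc_le) auto
  also have "\<dots> = ennreal ((2 * min r (sqrt (a + T))) ^ (card I - 1) * L)"
    using I assms by (simp add: L_def ennreal_mult'[symmetric] mult.commute)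
  finally show ?thesis unfolding S_def L_def .
qed

lemma shell_preimage_subset_coord_slabs:
  fixes q p :: "'a::euclidean_space"
  shows "(\<lambda>f. \<Sum>b\<in>Basis. f b *\<^sub>R b) -` (cball q r \<inter> {x. a < (norm (x - p))\<^sup>2 \<and> (norm (x - p))\<^sup>2 < a + T})
      \<inter> space (PiM (Basis::'a set) (\<lambda>_. lborel))
    \<subseteq> (\<Union>i\<in>Basis. coord_slab Basis i (\<lambda>j. q \<bullet> j) (\<lambda>j. p \<bullet> j) r a T DIM('a))"
proof
  fix f assume f: "f \<in> (\<lambda>f. \<Sum>b\<in>Basis. f b *\<^sub>R b) -` (cball q r \<inter> {x. a < (norm (x - p))\<^sup>2 \<and> (norm (x - p))\<^sup>2 < a + T})
      \<inter> space (PiM (Basis::'a set) (\<lambda>_. lborel))"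
  define x where "x = (\<Sum>b\<in>Basis. f b *\<^sub>R b)"
  have coord: "x \<bullet> j = f j" if "j \<in> Basis" for j
    unfolding x_def using that by (simp add: inner_sum_left inner_Basis if_distrib[of "(*) _"] cong: if_cong)
  have norm_sq: "(norm (x - p))\<^sup>2 = (\<Sum>j\<in>Basis. (f j - p \<bullet> j)\<^sup>2)"
    unfolding power2_norm_eq_inner
    by (subst euclidean_inner) (auto simp: inner_diff_left coord power2_eq_square intro!: sum.cong)
  have box: "\<bar>f j - q \<bullet> j\<bar> \<le> r" if "j \<in> Basis" for j
  proof -
    have "\<bar>(x - q) \<bullet> j\<bar> \<le> norm (x - q)" using that by (rule Basis_le_norm)
    also have "\<dots> \<le> r" using f unfolding x_def by (auto simp: dist_norm norm_minus_commute)
    finally show ?thesis using that by (simp add: inner_diff_left coord)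
  qed
  obtain i where i: "i \<in> Basis" "(\<Sum>j\<in>Basis. (f j - p \<bullet> j)\<^sup>2) \<le> real DIM('a) * (f i - p \<bullet> i)\<^sup>2"
    using ex_sum_le_card_mult[of "Basis::'a set" "\<lambda>j. (f j - p \<bullet> j)\<^sup>2"] by auto
  have "f \<in> coord_slab Basis i (\<lambda>j. q \<bullet> j) (\<lambda>j. p \<bullet> j) r a T DIM('a)"
    using f i box norm_sq unfolding coord_slab_def x_def by auto
  then show "f \<in> (\<Union>i\<in>Basis. coord_slab Basis i (\<lambda>j. q \<bullet> j) (\<lambda>j. p \<bullet> j) r a T DIM('a))"
    using i by auto
qed

lemma emeasure_cball_shell_le:
  fixes q p :: "'a::euclidean_space"
  assumes "2 \<le> DIM('a)" "0 < r" "0 < T"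
  shows "emeasure lborel (cball q r \<inter> {x. a < (norm (x - p))\<^sup>2 \<and> (norm (x - p))\<^sup>2 < a + T})
     \<le> ennreal (DIM('a) * 2 ^ DIM('a) * sqrt DIM('a) * T * r ^ (DIM('a) - 2))"
proof (cases "0 < a + T")
  case False
  then have "cball q r \<inter> {x. a < (norm (x - p))\<^sup>2 \<and> (norm (x - p))\<^sup>2 < a + T} = {}"
    by (auto simp: not_less) (smt (verit) zero_le_power2)
  then show ?thesis by simp
next
  case True
  define n where "n = DIM('a)"
  define R where "R = sqrt (a + T)"
  define X where "X = cball q r \<inter> {x. a < (norm (x - p))\<^sup>2 \<and> (norm (x - p))\<^sup>2 < a + T}"
  define P where "P = PiM (Basis::'a set) (\<lambda>_. lborel::real measure)"
  define S where "S i = coord_slab Basis i (\<lambda>j. q \<bullet> j) (\<lambda>j. p \<bullet> j) r a T DIM('a)" for i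
  have R: "0 < R" unfolding R_def using True by simp
  have S_sets: "S ` Basis \<subseteq> sets P" unfolding S_def P_def by (auto intro: sets_coord_slab)
  have "emeasure lborel X = emeasure (distr P borel (\<lambda>f. \<Sum>b\<in>Basis. f b *\<^sub>R b)) X"
    unfolding P_def by (subst lborel_eq) rule
  also have "\<dots> = emeasure P ((\<lambda>f. \<Sum>b\<in>Basis. f b *\<^sub>R b) -` X \<inter> space P)"
    unfolding P_def X_def by (intro emeasure_distr) auto
  also have "\<dots> \<le> emeasure P (\<Union>i\<in>Basis. S i)"
    using S_sets unfolding X_def P_def S_def by (intro emeasure_mono shell_preimage_subset_coord_slabs) auto
  also have "\<dots> \<le> (\<Sum>i\<in>Basis. emeasure P (S i))"
    using S_sets by (intro emeasure_subadditive_finite) auto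
  also have "\<dots> \<le> (\<Sum>i\<in>(Basis::'a set). ennreal ((2 * min r R) ^ (n - 1) * (2 * sqrt n * T / R)))"
    unfolding P_def S_def R_def n_def using assms True
    by (intro sum_mono order_trans[OF emeasure_coord_slab_le]) auto
  also have "\<dots> = ennreal (n * ((2 * min r R) ^ (n - 1) * (2 * sqrt n * T / R)))"
    unfolding n_def by (simp add: ennreal_of_nat_eq_real_of_nat ennreal_mult'[symmetric])
  also have "\<dots> \<le> ennreal (n * (2 ^ (n - 1) * (2 * sqrt n * T) * r ^ (n - 2)))"
    using assms R unfolding n_def by (intro ennreal_leI mult_left_mono power_min_mult_div_le) auto
  also have "\<dots> = ennreal (n * 2 ^ n * sqrt n * T * r ^ (n - 2))"
    using assms power_Suc2[of "2::real" "n - 1"] unfolding n_def by simp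
  finally show ?thesis unfolding X_def n_def .
qed

lemma min_power_le_powr_interpolation:
  fixes \<omega> C R T \<sigma> :: real and n :: nat
  assumes "2 \<le> n" "0 \<le> \<omega>" "0 \<le> C" "0 < R" "0 < T" "0 \<le> \<sigma>" "\<sigma> \<le> 1"
  shows "min (\<omega> * R ^ n) (C * T * R ^ (n - 2)) \<le> \<omega> powr (1 - \<sigma>) * C powr \<sigma> * R powr (n - 2 * \<sigma>) * T powr \<sigma>"
proof -
  have pow: "(R ^ k) powr t = R powr (real k * t)" for k t
    using assms by (simp add: powr_realpow[symmetric] powr_powr)
  have "real (n - 2) = real n - 2" using assms by simp
  then have "R powr (real n * (1 - \<sigma>)) * R powr (real (n - 2) * \<sigma>) = R powr (n - 2 * \<sigma>)"
    by (simp add: powr_add[symmetric] algebra_simps)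
  moreover have "(\<omega> * R ^ n) powr (1 - \<sigma>) = \<omega> powr (1 - \<sigma>) * R powr (real n * (1 - \<sigma>))"
    using assms by (simp add: powr_mult pow)
  moreover have "(C * T * R ^ (n - 2)) powr \<sigma> = C powr \<sigma> * T powr \<sigma> * R powr (real (n - 2) * \<sigma>)"
    using assms by (simp add: powr_mult pow)
  moreover have "min (\<omega> * R ^ n) (C * T * R ^ (n - 2)) \<le> (\<omega> * R ^ n) powr (1 - \<sigma>) * (C * T * R ^ (n - 2)) powr \<sigma>"
    using assms by (intro min_le_powr_interpolation) auto
  ultimately show ?thesis by (simp only: ac_simps)
qed

lemma emeasure_ball_shell_le_interpolated:
  fixes \<sigma> :: real
  assumes "2 \<le> DIM('a::euclidean_space)" "0 \<le> \<sigma>" "\<sigma> \<le> 1"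
  shows "\<exists>M\<ge>0. \<forall>(q::'a) p c R T. 0 < R \<longrightarrow> 0 < T \<longrightarrow>
    emeasure lborel (ball q R \<inter> {z. \<bar>(norm (z - p))\<^sup>2 - c\<bar> < T}) \<le> ennreal (M * R powr (DIM('a) - 2 * \<sigma>) * T powr \<sigma>)"
proof (intro exI conjI allI impI)
  define n where "n = DIM('a)"
  define \<omega> where "\<omega> = unit_ball_vol n"
  define C where "C = 2 * (n * 2 ^ n * sqrt n)"
  show "0 \<le> \<omega> powr (1 - \<sigma>) * C powr \<sigma>" by simp
  fix q p :: 'a and c R T :: real
  assume R: "0 < R" and T: "0 < T"
  define E where "E = ball q R \<inter> {z. \<bar>(norm (z - p))\<^sup>2 - c\<bar> < T}"
  have "emeasure lborel E \<le> emeasure lborel (ball q R)" unfolding E_def by (intro emeasure_mono) auto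
  also have "\<dots> = ennreal (\<omega> * R ^ n)" unfolding \<omega>_def n_def using R by (simp add: emeasure_ball)
  finally have ball_bound: "emeasure lborel E \<le> ennreal (\<omega> * R ^ n)" .
  have "E \<subseteq> cball q R \<inter> {z. c - T < (norm (z - p))\<^sup>2 \<and> (norm (z - p))\<^sup>2 < c - T + 2 * T}"
    unfolding E_def by (auto simp: abs_less_iff)
  then have "emeasure lborel E \<le> emeasure lborel (cball q R \<inter> {z. c - T < (norm (z - p))\<^sup>2 \<and> (norm (z - p))\<^sup>2 < c - T + 2 * T})"
    by (intro emeasure_mono) auto
  also have "\<dots> \<le> ennreal (n * 2 ^ n * sqrt n * (2 * T) * R ^ (n - 2))"
    unfolding n_def using assms R T by (intro emeasure_cball_shell_le) auto
  finally have shell_bound: "emeasure lborel E \<le> ennreal (C * T * R ^ (n - 2))"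
    unfolding C_def by (simp add: ac_simps)
  have "emeasure lborel E \<le> ennreal (min (\<omega> * R ^ n) (C * T * R ^ (n - 2)))"
    using ball_bound shell_bound by (simp add: min_def)
  also have "\<dots> \<le> ennreal (\<omega> powr (1 - \<sigma>) * C powr \<sigma> * R powr (n - 2 * \<sigma>) * T powr \<sigma>)"
    using assms R T unfolding \<omega>_def C_def n_def by (intro ennreal_leI min_power_le_powr_interpolation) auto
  finally show "emeasure lborel (ball q R \<inter> {z. \<bar>(norm (z - p))\<^sup>2 - c\<bar> < T})
      \<le> ennreal (\<omega> powr (1 - \<sigma>) * C powr \<sigma> * R powr (DIM('a) - 2 * \<sigma>) * T powr \<sigma>)"
    unfolding E_def n_def .
qed

section \<open>Integrals against shell weights\<close>

lemma powr_neg_mult_le_double_dyadic_sum: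
  fixes s t a \<beta> :: real
  assumes "0 \<le> s" "0 \<le> t" "0 \<le> a" "0 \<le> \<beta>"
  shows "ennreal ((1 + s) powr (-a) * (1 + t) powr (-\<beta>))
    \<le> (\<Sum>k. \<Sum>j. ennreal (2 powr a * (2 powr (-a)) ^ k * (2 powr \<beta> * (2 powr (-\<beta>)) ^ j))
                 * indicator {..<2 ^ k} s * indicator {..<2 ^ j} t)"
proof -
  define u where "u k = ennreal (2 powr a * (2 powr (-a)) ^ k) * indicator {..<2 ^ k} s" for k :: nat
  define v where "v j = ennreal (2 powr \<beta> * (2 powr (-\<beta>)) ^ j) * indicator {..<2 ^ j} t" for j :: nat
  have "ennreal ((1 + s) powr (-a) * (1 + t) powr (-\<beta>)) = ennreal ((1 + s) powr (-a)) * ennreal ((1 + t) powr (-\<beta>))"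
    by (intro ennreal_mult) auto
  also have "\<dots> \<le> (\<Sum>k. u k) * (\<Sum>j. v j)"
    unfolding u_def v_def using assms by (intro mult_mono powr_neg_le_dyadic_sum) auto
  also have "\<dots> = (\<Sum>k. u k * (\<Sum>j. v j))"
    by (rule ennreal_suminf_multc[symmetric])
  also have "\<dots> = (\<Sum>k. \<Sum>j. u k * v j)"
    by (intro suminf_cong ennreal_suminf_cmult[symmetric])
  also have "\<dots> = (\<Sum>k. \<Sum>j. ennreal (2 powr a * (2 powr (-a)) ^ k * (2 powr \<beta> * (2 powr (-\<beta>)) ^ j))
                 * indicator {..<2 ^ k} s * indicator {..<2 ^ j} t)"
    unfolding u_def v_def by (intro suminf_cong) (simp add: ennreal_mult mult.assoc mult.left_commute)
  finally show ?thesis .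
qed

lemma nn_integral_decay_shell_le_dyadic_series:
  fixes q p :: "'a::euclidean_space" and a \<beta> c :: real
  assumes "0 \<le> a" "0 \<le> \<beta>"
  shows "(\<integral>\<^sup>+z. ennreal ((1 + norm (z - q)) powr (-a) * (1 + \<bar>(norm (z - p))\<^sup>2 - c\<bar>) powr (-\<beta>)) \<partial>lborel)
    \<le> (\<Sum>k. \<Sum>j. ennreal (2 powr a * (2 powr (-a)) ^ k * (2 powr \<beta> * (2 powr (-\<beta>)) ^ j))
        * emeasure lborel (ball q (2 ^ k) \<inter> {z. \<bar>(norm (z - p))\<^sup>2 - c\<bar> < 2 ^ j}))"
proof -
  define w where "w k j = 2 powr a * (2 powr (-a)) ^ k * (2 powr \<beta> * (2 powr (-\<beta>)) ^ j)" for k j :: nat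
  define E where "E k j = ball q (2 ^ k) \<inter> {z. \<bar>(norm (z - p))\<^sup>2 - c\<bar> < (2::real) ^ j}" for k j :: nat
  have [measurable]: "E k j \<in> sets lborel" for k j unfolding E_def by measurable
  have "(\<integral>\<^sup>+z. ennreal ((1 + norm (z - q)) powr (-a) * (1 + \<bar>(norm (z - p))\<^sup>2 - c\<bar>) powr (-\<beta>)) \<partial>lborel)
      \<le> (\<integral>\<^sup>+z. (\<Sum>k. \<Sum>j. ennreal (w k j) * indicator (E k j) z) \<partial>lborel)"
  proof (rule nn_integral_mono)
    fix z :: 'a
    have "indicator {..<2 ^ k} (norm (z - q)) * indicator {..<2 ^ j} \<bar>(norm (z - p))\<^sup>2 - c\<bar> = (indicator (E k j) z :: ennreal)"
      for k j by (simp add: indicator_def E_def dist_norm norm_minus_commute)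
    then show "ennreal ((1 + norm (z - q)) powr (-a) * (1 + \<bar>(norm (z - p))\<^sup>2 - c\<bar>) powr (-\<beta>))
        \<le> (\<Sum>k. \<Sum>j. ennreal (w k j) * indicator (E k j) z)"
      using powr_neg_mult_le_double_dyadic_sum[of "norm (z - q)" "\<bar>(norm (z - p))\<^sup>2 - c\<bar>" a \<beta>] assms
      by (simp add: w_def mult.assoc)
  qed
  also have "\<dots> = (\<Sum>k. \<integral>\<^sup>+z. (\<Sum>j. ennreal (w k j) * indicator (E k j) z) \<partial>lborel)"
    by (intro nn_integral_suminf) measurable
  also have "\<dots> = (\<Sum>k. \<Sum>j. \<integral>\<^sup>+z. ennreal (w k j) * indicator (E k j) z \<partial>lborel)"
    by (intro suminf_cong nn_integral_suminf) measurable
  also have "\<dots> = (\<Sum>k. \<Sum>j. ennreal (w k j) * emeasure lborel (E k j))"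
    by (intro suminf_cong nn_integral_cmult_indicator) measurable
  finally show ?thesis unfolding w_def E_def .
qed

lemma nn_integral_decay_shell_bounded:
  fixes a \<beta> :: real
  assumes "2 \<le> DIM('a::euclidean_space)" "0 < \<beta>" "\<beta> < 1" "0 \<le> a" "real DIM('a) < a + 2 * \<beta>"
  shows "\<exists>K\<ge>0. \<forall>(q::'a) p c.
    (\<integral>\<^sup>+z. ennreal ((1 + norm (z - q)) powr (-a) * (1 + \<bar>(norm (z - p))\<^sup>2 - c\<bar>) powr (-\<beta>)) \<partial>lborel) \<le> ennreal K"
proof -
  define n where "n = real DIM('a)"
  \<comment> \<open>Any \<sigma> strictly between max 0 ((n - a)/2) and \<beta> makes both geometric series converge.\<close>
  define \<sigma> where "\<sigma> = (max 0 ((n - a) / 2) + \<beta>) / 2"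
  have \<sigma>: "0 < \<sigma>" "\<sigma> < \<beta>" "n - 2 * \<sigma> - a < 0"
    using assms unfolding \<sigma>_def n_def by (auto simp: max_def field_simps)
  obtain M where M: "0 \<le> M" and shell: "\<And>(q::'a) p c R T. 0 < R \<Longrightarrow> 0 < T \<Longrightarrow>
      emeasure lborel (ball q R \<inter> {z. \<bar>(norm (z - p))\<^sup>2 - c\<bar> < T}) \<le> ennreal (M * R powr (n - 2 * \<sigma>) * T powr \<sigma>)"
    using emeasure_ball_shell_le_interpolated[where 'a='a, of \<sigma>] assms \<sigma> unfolding n_def by auto
  define x where "x = (2::real) powr (n - 2 * \<sigma> - a)"
  define y where "y = (2::real) powr (\<sigma> - \<beta>)"
  define P where "P = 2 powr a * 2 powr \<beta> * M"
  have x: "0 \<le> x" "x < 1" and y: "0 \<le> y" "y < 1"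
    using \<sigma> unfolding x_def y_def by (auto intro: powr_less_one)
  have P: "0 \<le> P" using M unfolding P_def by simp
  have term_le: "ennreal (2 powr a * (2 powr (-a)) ^ k * (2 powr \<beta> * (2 powr (-\<beta>)) ^ j))
      * emeasure lborel (ball q (2 ^ k) \<inter> {z. \<bar>(norm (z - p))\<^sup>2 - c\<bar> < 2 ^ j})
      \<le> ennreal (P * x ^ k * y ^ j)" for q p :: 'a and c :: real and k j :: nat
  proof -
    have "(2::real) powr (-a) * 2 powr (n - 2 * \<sigma>) = x" "(2::real) powr (-\<beta>) * 2 powr \<sigma> = y"
      unfolding x_def y_def by (simp_all add: powr_add[symmetric])
    then have eq: "2 powr a * (2 powr (-a)) ^ k * (2 powr \<beta> * (2 powr (-\<beta>)) ^ j)
        * (M * (2 ^ k) powr (n - 2 * \<sigma>) * (2 ^ j) powr \<sigma>) = P * x ^ k * y ^ j"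
      unfolding P_def power_powr_commute[of 2, simplified] by (simp add: power_mult_distrib[symmetric] ac_simps)
    have "ennreal (2 powr a * (2 powr (-a)) ^ k * (2 powr \<beta> * (2 powr (-\<beta>)) ^ j))
        * emeasure lborel (ball q (2 ^ k) \<inter> {z. \<bar>(norm (z - p))\<^sup>2 - c\<bar> < 2 ^ j})
      \<le> ennreal (2 powr a * (2 powr (-a)) ^ k * (2 powr \<beta> * (2 powr (-\<beta>)) ^ j))
        * ennreal (M * (2 ^ k) powr (n - 2 * \<sigma>) * (2 ^ j) powr \<sigma>)"
      by (intro mult_left_mono shell) auto
    also have "\<dots> = ennreal (P * x ^ k * y ^ j)"
      using M by (simp add: ennreal_mult[symmetric] eq)
    finally show ?thesis .
  qed
  show ?thesis
  proof (intro exI conjI allI)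
    show "0 \<le> P / (1 - y) / (1 - x)" using P x y by simp
    fix q p :: 'a and c :: real
    have "(\<integral>\<^sup>+z. ennreal ((1 + norm (z - q)) powr (-a) * (1 + \<bar>(norm (z - p))\<^sup>2 - c\<bar>) powr (-\<beta>)) \<partial>lborel)
        \<le> (\<Sum>k. \<Sum>j. ennreal (P * x ^ k * y ^ j))"
      using assms by (intro order_trans[OF nn_integral_decay_shell_le_dyadic_series] suminf_le summableI allI term_le) auto
    also have "\<dots> = ennreal (P / (1 - y) / (1 - x))"
      using P x y by (rule suminf_suminf_ennreal_geometric)
    finally show "(\<integral>\<^sup>+z. ennreal ((1 + norm (z - q)) powr (-a) * (1 + \<bar>(norm (z - p))\<^sup>2 - c\<bar>) powr (-\<beta>)) \<partial>lborel)
        \<le> ennreal (P / (1 - y) / (1 - x))" .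
  qed
qed

section \<open>The bound on \<open>Theta2\<close>\<close>

definition Theta2_weight :: "real \<Rightarrow> real \<Rightarrow> 'a::real_normed_vector \<Rightarrow> real \<Rightarrow> 'a \<Rightarrow> real" where
  "Theta2_weight s \<beta> \<xi> \<tau> \<zeta> = (1 + norm \<zeta>) powr (-s) * (1 + norm (\<xi> - \<zeta>)) powr (-s)
     * (1 + \<bar>\<tau> + (norm \<zeta>)\<^sup>2 + (norm (\<xi> - \<zeta>))\<^sup>2\<bar>) powr (-\<beta>)"

lemma Theta2_weight_le_shell_decay:
  fixes \<xi> \<zeta> :: "'a::real_inner" and s \<beta> \<tau> :: real
  assumes "0 \<le> \<beta>" "c = - (\<tau> + (norm \<xi>)\<^sup>2 / 2) / 2"
  shows "Theta2_weight s \<beta> \<xi> \<tau> \<zeta>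
    \<le> ((1 + norm (\<zeta> - 0)) powr (-(2 * s)) + (1 + norm (\<zeta> - \<xi>)) powr (-(2 * s)))
      * (1 + \<bar>(norm (\<zeta> - (1/2) *\<^sub>R \<xi>))\<^sup>2 - c\<bar>) powr (-\<beta>)"
proof -
  \<comment> \<open>Completing the square turns the resonance function into a shell around \<xi>/2.\<close>
  have "\<tau> + (norm \<zeta>)\<^sup>2 + (norm (\<xi> - \<zeta>))\<^sup>2 = 2 * ((norm (\<zeta> - (1/2) *\<^sub>R \<xi>))\<^sup>2 - c)"
    using assms(2) norm_sq_add_norm_diff_sq[of \<zeta> \<xi>] by (simp add: field_simps)
  then have "(1 + \<bar>\<tau> + (norm \<zeta>)\<^sup>2 + (norm (\<xi> - \<zeta>))\<^sup>2\<bar>) powr (-\<beta>)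
      \<le> (1 + \<bar>(norm (\<zeta> - (1/2) *\<^sub>R \<xi>))\<^sup>2 - c\<bar>) powr (-\<beta>)"
    using assms(1) by (intro powr_mono2') auto
  moreover have "(1 + norm \<zeta>) powr (-s) * (1 + norm (\<xi> - \<zeta>)) powr (-s)
      \<le> (1 + norm (\<zeta> - 0)) powr (-(2 * s)) + (1 + norm (\<zeta> - \<xi>)) powr (-(2 * s))"
    using powr_neg_mult_le_add[of "1 + norm \<zeta>" "1 + norm (\<xi> - \<zeta>)" s]
    by (simp add: norm_minus_commute add_pos_nonneg)
  ultimately show ?thesis unfolding Theta2_weight_def by (intro mult_mono) auto
qed

lemma nn_integral_Theta2_weight_bounded:
  fixes s \<beta> :: real
  assumes "2 \<le> DIM('a::euclidean_space)" "0 \<le> s" "0 < \<beta>" "\<beta> < 1" "real DIM('a) < 2 * s + 2 * \<beta>"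
  shows "\<exists>K\<ge>0. \<forall>(\<xi>::'a) \<tau>. (\<integral>\<^sup>+\<zeta>. ennreal (Theta2_weight s \<beta> \<xi> \<tau> \<zeta>) \<partial>lborel) \<le> ennreal K"
proof -
  obtain K where "0 \<le> K" and K: "\<And>(q::'a) p c. (\<integral>\<^sup>+z. ennreal ((1 + norm (z - q)) powr (-(2 * s))
      * (1 + \<bar>(norm (z - p))\<^sup>2 - c\<bar>) powr (-\<beta>)) \<partial>lborel) \<le> ennreal K"
    using nn_integral_decay_shell_bounded[where 'a='a and a="2 * s" and \<beta>=\<beta>] assms by auto
  show ?thesis
  proof (intro exI conjI allI)
    show "0 \<le> 2 * K" using \<open>0 \<le> K\<close> by simp
    fix \<xi> :: 'a and \<tau> :: real
    define c where "c = - (\<tau> + (norm \<xi>)\<^sup>2 / 2) / 2"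
    define V where "V q z = ennreal ((1 + norm (z - q)) powr (-(2 * s))
      * (1 + \<bar>(norm (z - (1/2) *\<^sub>R \<xi>))\<^sup>2 - c\<bar>) powr (-\<beta>))" for q z :: 'a
    have "(\<integral>\<^sup>+\<zeta>. ennreal (Theta2_weight s \<beta> \<xi> \<tau> \<zeta>) \<partial>lborel) \<le> (\<integral>\<^sup>+\<zeta>. V 0 \<zeta> + V \<xi> \<zeta> \<partial>lborel)"
      using Theta2_weight_le_shell_decay[OF _ c_def] assms unfolding V_def
      by (intro nn_integral_mono) (simp add: ennreal_plus[symmetric] distrib_right ennreal_leI del: ennreal_plus)
    also have "\<dots> = (\<integral>\<^sup>+\<zeta>. V 0 \<zeta> \<partial>lborel) + (\<integral>\<^sup>+\<zeta>. V \<xi> \<zeta> \<partial>lborel)"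
      unfolding V_def by (intro nn_integral_add) measurable
    also have "\<dots> \<le> ennreal K + ennreal K"
      unfolding V_def by (intro add_mono K)
    also have "\<dots> = ennreal (2 * K)"
      using \<open>0 \<le> K\<close> by (simp add: ennreal_plus[symmetric] del: ennreal_plus)
    finally show "(\<integral>\<^sup>+\<zeta>. ennreal (Theta2_weight s \<beta> \<xi> \<tau> \<zeta>) \<partial>lborel) \<le> ennreal (2 * K)" .
  qed
qed

lemma Theta2_integrand_le:
  fixes \<xi> \<zeta> :: "real ^ 'n" and s \<rho> \<beta> \<delta> \<tau> t :: real
  assumes "0 \<le> \<beta>" "\<beta> + \<delta> = 4 * \<rho>" "2 * \<rho> \<le> \<delta>"
  shows "Theta2_integrand s \<rho> \<xi> \<tau> (\<zeta>, t) \<le> 2 powr \<beta> * Theta2_weight s \<beta> \<xi> \<tau> \<zeta>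
    * ((1 + \<bar>t + (norm \<zeta>)\<^sup>2\<bar>) powr (-\<delta>) + (1 + \<bar>\<tau> - t + (norm (\<xi> - \<zeta>))\<^sup>2\<bar>) powr (-\<delta>))"
proof -
  define A where "A = 1 + \<bar>t + (norm \<zeta>)\<^sup>2\<bar>"
  define B where "B = 1 + \<bar>\<tau> - t + (norm (\<xi> - \<zeta>))\<^sup>2\<bar>"
  define D where "D = 1 + \<bar>\<tau> + (norm \<zeta>)\<^sup>2 + (norm (\<xi> - \<zeta>))\<^sup>2\<bar>"
  define W where "W = (1 + norm \<zeta>) powr (-s) * (1 + norm (\<xi> - \<zeta>)) powr (-s)"
  have D_le: "D \<le> A + B" unfolding A_def B_def D_def by arith
  have "Theta2_integrand s \<rho> \<xi> \<tau> (\<zeta>, t) = W * (1 / (A powr (2 * \<rho>) * B powr (2 * \<rho>)))"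
    unfolding Theta2_integrand_def W_def A_def B_def Let_def by simp
  also have "\<dots> \<le> W * (2 powr \<beta> * D powr (-\<beta>) * (A powr (-\<delta>) + B powr (-\<delta>)))"
    using assms D_le unfolding W_def
    by (intro mult_left_mono inverse_powr_mult_le_decoupled) (auto simp: A_def B_def D_def)
  also have "\<dots> = 2 powr \<beta> * (W * D powr (-\<beta>)) * (A powr (-\<delta>) + B powr (-\<delta>))"
    by (simp only: ac_simps)
  finally show ?thesis unfolding A_def B_def D_def W_def Theta2_weight_def .
qed

lemma nn_integral_Theta2_integrand_tau_le:
  fixes \<xi> \<zeta> :: "real ^ 'n" and s \<rho> \<beta> \<delta> \<tau> :: real
  assumes "0 \<le> \<beta>" "\<beta> + \<delta> = 4 * \<rho>" "2 * \<rho> \<le> \<delta>" "1 < \<delta>"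
  shows "(\<integral>\<^sup>+t. ennreal (Theta2_integrand s \<rho> \<xi> \<tau> (\<zeta>, t)) \<partial>lborel)
    \<le> ennreal (2 powr \<beta> * (4 * 2 powr \<delta> / (1 - 2 powr (1 - \<delta>)))) * ennreal (Theta2_weight s \<beta> \<xi> \<tau> \<zeta>)"
proof -
  define I where "I = 2 * 2 powr \<delta> / (1 - 2 powr (1 - \<delta>))"
  define H where "H = 2 powr \<beta> * Theta2_weight s \<beta> \<xi> \<tau> \<zeta>"
  have H: "0 \<le> H" unfolding H_def Theta2_weight_def by simp
  have I: "0 \<le> I" unfolding I_def using assms by (simp add: powr_less_one less_imp_le)
  have left: "(\<integral>\<^sup>+t. ennreal ((1 + \<bar>t + (norm \<zeta>)\<^sup>2\<bar>) powr (-\<delta>)) \<partial>lborel) \<le> ennreal I"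
    using nn_integral_affine_one_plus_abs_powr_le[of \<delta> 1 "(norm \<zeta>)\<^sup>2"] assms
    unfolding I_def by (simp add: add.commute)
  have right: "(\<integral>\<^sup>+t. ennreal ((1 + \<bar>\<tau> - t + (norm (\<xi> - \<zeta>))\<^sup>2\<bar>) powr (-\<delta>)) \<partial>lborel) \<le> ennreal I"
    using nn_integral_affine_one_plus_abs_powr_le[of \<delta> "-1" "\<tau> + (norm (\<xi> - \<zeta>))\<^sup>2"] assms
    unfolding I_def by (simp add: algebra_simps)
  have "(\<integral>\<^sup>+t. ennreal (Theta2_integrand s \<rho> \<xi> \<tau> (\<zeta>, t)) \<partial>lborel)
      \<le> (\<integral>\<^sup>+t. ennreal H * (ennreal ((1 + \<bar>t + (norm \<zeta>)\<^sup>2\<bar>) powr (-\<delta>))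
          + ennreal ((1 + \<bar>\<tau> - t + (norm (\<xi> - \<zeta>))\<^sup>2\<bar>) powr (-\<delta>))) \<partial>lborel)"
    using Theta2_integrand_le[OF assms(1-3)] H
    by (intro nn_integral_mono) (simp add: H_def ennreal_mult[symmetric] ennreal_plus[symmetric] del: ennreal_plus)
  also have "\<dots> = ennreal H * ((\<integral>\<^sup>+t. ennreal ((1 + \<bar>t + (norm \<zeta>)\<^sup>2\<bar>) powr (-\<delta>)) \<partial>lborel)
      + (\<integral>\<^sup>+t. ennreal ((1 + \<bar>\<tau> - t + (norm (\<xi> - \<zeta>))\<^sup>2\<bar>) powr (-\<delta>)) \<partial>lborel))"
    by (subst nn_integral_cmult) (measurable, subst nn_integral_add, auto)
  also have "\<dots> \<le> ennreal H * (ennreal I + ennreal I)"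
    by (intro mult_left_mono add_mono left right) auto
  also have "\<dots> = ennreal (H * (2 * I))"
    using H I by (simp add: ennreal_plus[symmetric] ennreal_mult[symmetric] del: ennreal_plus)
  also have "H * (2 * I) = 2 powr \<beta> * (4 * 2 powr \<delta> / (1 - 2 powr (1 - \<delta>))) * Theta2_weight s \<beta> \<xi> \<tau> \<zeta>"
    unfolding H_def I_def by (simp add: ac_simps)
  also have "ennreal \<dots> = ennreal (2 powr \<beta> * (4 * 2 powr \<delta> / (1 - 2 powr (1 - \<delta>)))) * ennreal (Theta2_weight s \<beta> \<xi> \<tau> \<zeta>)"
    using assms by (intro ennreal_mult') (simp add: powr_less_one less_imp_le)
  finally show ?thesis .
qed

lemma Theta2_le_nn_integral_Theta2_weight:
  fixes s \<rho> \<beta> \<delta> :: real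
  assumes "0 \<le> \<beta>" "\<beta> + \<delta> = 4 * \<rho>" "2 * \<rho> \<le> \<delta>" "1 < \<delta>"
  shows "\<exists>C\<ge>0. \<forall>(\<xi>::real ^ 'n) \<tau>. Theta2 s \<rho> \<xi> \<tau> \<le> ennreal C * (\<integral>\<^sup>+\<zeta>. ennreal (Theta2_weight s \<beta> \<xi> \<tau> \<zeta>) \<partial>lborel)"
proof (intro exI conjI allI)
  show "0 \<le> 2 powr \<beta> * (4 * 2 powr \<delta> / (1 - 2 powr (1 - \<delta>)))"
    using assms by (simp add: powr_less_one less_imp_le)
  fix \<xi> :: "real ^ 'n" and \<tau> :: real
  have "(\<lambda>p. ennreal (Theta2_integrand s \<rho> \<xi> \<tau> p)) \<in> borel_measurable (lborel \<Otimes>\<^sub>M lborel)"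
    unfolding Theta2_integrand_def Let_def by measurable
  then have "Theta2 s \<rho> \<xi> \<tau> = (\<integral>\<^sup>+\<zeta>. \<integral>\<^sup>+t. ennreal (Theta2_integrand s \<rho> \<xi> \<tau> (\<zeta>, t)) \<partial>lborel \<partial>lborel)"
    unfolding Theta2_def lborel_prod[symmetric] by (rule lborel.nn_integral_fst[symmetric])
  also have "\<dots> \<le> (\<integral>\<^sup>+\<zeta>. ennreal (2 powr \<beta> * (4 * 2 powr \<delta> / (1 - 2 powr (1 - \<delta>))))
      * ennreal (Theta2_weight s \<beta> \<xi> \<tau> \<zeta>) \<partial>lborel)"
    using assms by (intro nn_integral_mono nn_integral_Theta2_integrand_tau_le)
  also have "\<dots> = ennreal (2 powr \<beta> * (4 * 2 powr \<delta> / (1 - 2 powr (1 - \<delta>))))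
      * (\<integral>\<^sup>+\<zeta>. ennreal (Theta2_weight s \<beta> \<xi> \<tau> \<zeta>) \<partial>lborel)"
    unfolding Theta2_weight_def by (intro nn_integral_cmult) measurable
  finally show "Theta2 s \<rho> \<xi> \<tau> \<le> ennreal (2 powr \<beta> * (4 * 2 powr \<delta> / (1 - 2 powr (1 - \<delta>))))
      * (\<integral>\<^sup>+\<zeta>. ennreal (Theta2_weight s \<beta> \<xi> \<tau> \<zeta>) \<partial>lborel)" .
qed

theorem lemma6p5:
  fixes s \<rho> :: real
  assumes "CARD('n::finite) \<ge> 2"
    and "s > real CARD('n) / 2 - 1"
    and "max (1/4) (real CARD('n) / 8 + 1/4 - s / 4) < \<rho>"
    and "\<rho> < 1/2"
  shows "\<exists>C::real. \<forall>(\<xi>::real ^ 'n) (\<tau>::real). Theta2 s \<rho> \<xi> \<tau> \<le> ennreal C"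
proof -
  define n where "n = real CARD('n)"
  \<comment> \<open>We need n/2 - s < \<beta> < 4\<rho> - 1 (so that \<delta> > 1); the hypotheses on \<rho> make this
    interval nonempty, and \<rho> < 1/2 then also gives \<beta> < 1 and 2\<rho> \<le> \<delta>.\<close>
  define \<beta> where "\<beta> = (max 0 (n / 2 - s) + (4 * \<rho> - 1)) / 2"
  define \<delta> where "\<delta> = 4 * \<rho> - \<beta>"
  have \<beta>: "0 < \<beta>" "\<beta> < 1" "n < 2 * s + 2 * \<beta>" and \<delta>: "\<beta> + \<delta> = 4 * \<rho>" "2 * \<rho> \<le> \<delta>" "1 < \<delta>"
    using assms unfolding \<beta>_def \<delta>_def n_def by (auto simp: max_def field_simps)
  obtain C where "0 \<le> C" and C: "\<And>(\<xi>::real ^ 'n) \<tau>.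
      Theta2 s \<rho> \<xi> \<tau> \<le> ennreal C * (\<integral>\<^sup>+\<zeta>. ennreal (Theta2_weight s \<beta> \<xi> \<tau> \<zeta>) \<partial>lborel)"
    using Theta2_le_nn_integral_Theta2_weight[where s=s, OF less_imp_le[OF \<beta>(1)] \<delta>] by auto
  have "0 \<le> s" using assms by simp
  then obtain K where K: "\<And>(\<xi>::real ^ 'n) \<tau>. (\<integral>\<^sup>+\<zeta>. ennreal (Theta2_weight s \<beta> \<xi> \<tau> \<zeta>) \<partial>lborel) \<le> ennreal K"
    using nn_integral_Theta2_weight_bounded[where 'a="real ^ 'n" and s=s and \<beta>=\<beta>] assms(1) \<beta>
    unfolding n_def by auto
  have "Theta2 s \<rho> \<xi> \<tau> \<le> ennreal (C * K)" for \<xi> :: "real ^ 'n" and \<tau>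
    using order_trans[OF C mult_left_mono[OF K]] unfolding ennreal_mult'[OF \<open>0 \<le> C\<close>] by simp
  then show ?thesis by blast
qed

end
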